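(* Let $m\ge5$ be odd, $N=3^m-1$ and $n=\frac{3^m-1}{2}$. Let $\beta$ be a primitive element of $\mathrm{GF}(3^m)$ (so $\beta^n=-1$). For $j\in\{1,3\}$ let $$g_{(j,m)}(x)=\prod_{\substack{1\le i\le N-1\\ \mathrm{wt}_3(i)\equiv j\ (\mathrm{mod}\ 4)}}(x-\beta^i)\in\mathrm{GF}(3)[x],$$ and let $\mathcal{C}_{(j,m)}$ be the ternary negacyclic code of length $n$ with generator polynomial $g_{(j,m)}(x)$. Then $\mathcal{C}_{(1,m)}$ has parameters $$\left[\frac{3^m-1}{2},\ \frac{3^m-1+2(-1)^{(m+1)/2}}{4},\ d\right],\quad d\ge\frac{3^{(m-1)/2}+2+(-1)^{(m-1)/2}}{4}+3,$$ and $\mathcal{C}_{(1,m)}^\perp=\mathcal{C}_{(3,m)}$, which has parameters $$\left[\frac{3^m-1}{2},\ \frac{3^m-1+2(-1)^{(m-1)/2}}{4},\ d^\perp\right],\quad d^\perp\ge\frac{3^{(m-1)/2}-(-1)^{(m-1)/2}}{4}+2.$$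
   Context: For $0\le i\le 3^m-1$ with $3$-adic expansion $i=\sum_{j=0}^{m-1}i_j3^j$, $i_j\in\{0,1,2\}$, the $3$-weight is $\mathrm{wt}_3(i)=\sum_j i_j$ (note $\mathrm{wt}_3(i)\equiv i\pmod 2$, so the indices in the product are odd and $g_{(j,m)}$ divides $x^n+1$). A ternary negacyclic code of length $n$ is an ideal of $\mathrm{GF}(3)[x]/(x^n+1)$, with codewords $(c_0,\dots,c_{n-1})\leftrightarrow\sum c_ix^i$. $[n,k,d]$ denotes length, dimension, minimum Hamming distance; $\perp$ is the Euclidean dual. *)

theory Defs
  imports "HOL-Computational_Algebra.Polynomial" Complex_Main
begin

fun wt3 :: "nat \<Rightarrow> nat" where
  "wt3 i = (if i = 0 then 0 else i mod 3 + wt3 (i div 3))"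

definition prime_subfield :: "'a::field set" where
  "prime_subfield = range of_nat"

definition primitive_element :: "'a::field \<Rightarrow> bool" where
  "primitive_element b \<longleftrightarrow> b \<noteq> 0 \<and> (\<forall>x. x \<noteq> 0 \<longrightarrow> (\<exists>i::nat. x = b ^ i))"

definition prime_polys :: "'a::field poly set" where
  "prime_polys = {p. \<forall>i. coeff p i \<in> prime_subfield}"

text \<open>Ambient space GF(3)^n, vectors (c_0,...,c_{n-1}) identified with polynomials of degree < n.\<close>
definition ambient :: "nat \<Rightarrow> 'a::field poly set" where
  "ambient n = {p \<in> prime_polys. \<forall>i\<ge>n. coeff p i = 0}"

definition gpoly :: "'a::field \<Rightarrow> nat \<Rightarrow> nat \<Rightarrow> 'a poly" where
  "gpoly b j m = (\<Prod>i\<in>{i. 1 \<le> i \<and> i \<le> 3^m - 2 \<and> wt3 i mod 4 = j}. [:- (b ^ i), 1:])"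

text \<open>Negacyclic code of length n generated by g: the ideal generated by g in GF(3)[x]/(x^n+1).\<close>
definition negacyclic_code :: "nat \<Rightarrow> 'a::field poly \<Rightarrow> 'a poly set" where
  "negacyclic_code n g = {(a * g) mod (monom 1 n + 1) | a. a \<in> prime_polys}"

definition hamming_dist :: "nat \<Rightarrow> 'a::zero poly \<Rightarrow> 'a poly \<Rightarrow> nat" where
  "hamming_dist n c c' = card {i. i < n \<and> coeff c i \<noteq> coeff c' i}"

definition min_dist :: "nat \<Rightarrow> 'a::zero poly set \<Rightarrow> nat" where
  "min_dist n C = Min {hamming_dist n c c' | c c'. c \<in> C \<and> c' \<in> C \<and> c \<noteq> c'}"

definition dual_code :: "nat \<Rightarrow> 'a::field poly set \<Rightarrow> 'a poly set" where
  "dual_code n C = {v \<in> ambient n. \<forall>c\<in>C. (\<Sum>i<n. coeff v i * coeff c i) = 0}"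

definition has_dim3 :: "'a set \<Rightarrow> nat \<Rightarrow> bool" where
  "has_dim3 C k \<longleftrightarrow> finite C \<and> card C = 3 ^ k"

end

theory Submission
  imports Defs
begin

text \<open>
  The roots of \<open>x\<^sup>n + 1\<close> are the powers \<open>\<beta>\<^sup>i\<close> with \<open>i\<close> odd, and since
  \<open>wt\<^sub>3(i) \<equiv> i (mod 2)\<close> the odd exponents split into the defining sets \<open>S\<^sub>1\<close>, \<open>S\<^sub>3\<close> of
  \<open>g\<^sub>1\<close> and \<open>g\<^sub>3\<close>, whose product is therefore \<open>x\<^sup>n + 1\<close>. Multiplication by 3 rotates
  ternary digits, so each \<open>S\<^sub>j\<close> is a union of cyclotomic cosets and \<open>g\<^sub>j\<close> lies in
  \<open>GF(3)[x]\<close>; the code it generates has dimension \<open>n - |S\<^sub>j|\<close>, and \<open>|S\<^sub>1|\<close>, \<open>|S\<^sub>3|\<close>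
  are obtained by counting digit strings by weight modulo 4.

  For odd \<open>m\<close>, \<open>i \<mapsto> 3\<^sup>m - 1 - i\<close> complements all digits and maps \<open>S\<^sub>3\<close> to itself. So
  for \<open>c \<in> \<C>\<^sub>1\<close> and \<open>v \<in> \<C>\<^sub>3\<close> the product of \<open>c\<close> with the reversal of \<open>v\<close>
  vanishes at all odd powers of \<open>\<beta>\<close>, hence is a multiple of \<open>x\<^sup>n + 1\<close>; by degree its
  coefficient at \<open>x\<^bsup>deg v\<^esup>\<close>, which is the inner product of \<open>c\<close> and \<open>v\<close>, vanishes.
  Equality of \<open>\<C>\<^sub>3\<close> and the dual of \<open>\<C>\<^sub>1\<close> follows by counting. For the distances,
  with \<open>h = (m - 1)/2\<close> each defining set contains \<open>3\<^sup>k\<close> consecutive terms of an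
  arithmetic progression of difference \<open>3\<^sup>h - 1\<close>, half of which is coprime to \<open>n\<close>, and
  the BCH bound applies.
\<close>

section \<open>Fields of characteristic 3\<close>

text \<open>Summing the translation \<open>x \<mapsto> x + 1\<close> over the whole ring.\<close>
lemma of_nat_card_UNIV_eq_0: "of_nat (card (UNIV :: 'a::{ring_1,finite} set)) = (0::'a)"
proof -
  have "(\<Sum>x\<in>UNIV. x) = (\<Sum>x\<in>UNIV. x + (1::'a))"
    by (rule sum.reindex_bij_witness[of _ "\<lambda>x. x + 1" "\<lambda>x. x - 1"]) auto
  also have "\<dots> = (\<Sum>x\<in>UNIV. x) + of_nat (card (UNIV :: 'a set))"
    by (simp add: sum.distrib)
  finally show ?thesis
    by simp
qed

lemma three_eq_0_if_card_power_3:
  assumes "card (UNIV :: 'a::{field,finite} set) = 3 ^ m"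
  shows "(3::'a) = 0"
  using of_nat_card_UNIV_eq_0[where 'a='a] assms by (metis of_nat_numeral of_nat_power power_eq_0_iff)

lemma zero_in_prime_subfield [simp]: "0 \<in> prime_subfield"
  unfolding prime_subfield_def by (metis of_nat_0 rangeI)

lemma ambient_iff: "p \<in> ambient n \<longleftrightarrow> p \<in> prime_polys \<and> (p = 0 \<or> degree p < n)"
proof -
  have "(\<forall>i\<ge>n. coeff p i = 0) \<longleftrightarrow> (p = 0 \<or> degree p < n)"
  proof
    assume "\<forall>i\<ge>n. coeff p i = 0"
    then show "p = 0 \<or> degree p < n"
      by (metis leading_coeff_0_iff not_le)
  qed (auto intro: coeff_eq_0)
  then show ?thesis
    unfolding ambient_def by auto
qed

definition frob3 :: "'a::field poly \<Rightarrow> 'a poly" where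
  "frob3 p = map_poly (\<lambda>x. x ^ 3) p"

lemma coeff_frob3: "coeff (frob3 p) i = coeff p i ^ 3"
  unfolding frob3_def by (simp add: coeff_map_poly)

lemma degree_frob3: "degree (frob3 p) = degree p"
  unfolding frob3_def by (cases "p = 0") (simp_all add: map_poly_degree_eq)

lemma frob3_linear: "frob3 [:- a, 1:] = [:- (a ^ 3), 1:]"
  by (rule poly_eqI) (simp add: coeff_frob3 coeff_pCons power3_eq_cube split: nat.split)

locale char3 =
  fixes ty :: "'a::field itself"
  assumes three_eq_0: "(3::'a) = 0"
begin

lemma cube_add: "((x::'a) + y) ^ 3 = x ^ 3 + y ^ 3"
proof -
  have "(x + y) ^ 3 = x ^ 3 + y ^ 3 + 3 * (x * x * y + x * y * y)"
    by (simp add: power3_eq_cube algebra_simps)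
  then show ?thesis
    using three_eq_0 by simp
qed

lemma cube_diff: "((x::'a) - y) ^ 3 = x ^ 3 - y ^ 3"
proof -
  have "(x - y) ^ 3 = x ^ 3 - y ^ 3 - 3 * (x * x * y - x * y * y)"
    by (simp add: power3_eq_cube algebra_simps)
  then show ?thesis
    using three_eq_0 by simp
qed

lemma cube_eq_cube_iff: "(x::'a) ^ 3 = y ^ 3 \<longleftrightarrow> x = y"
  using cube_diff[of x y] by auto

lemma prime_subfield_eq: "prime_subfield = {0, 1, 2::'a}"
proof -
  have "(of_nat k :: 'a) \<in> {0, 1, 2}" for k
  proof -
    have "(of_nat k :: 'a) = of_nat (3 * (k div 3) + k mod 3)"
      by simp
    also have "\<dots> = of_nat (k mod 3)"
      using three_eq_0 by (simp only: of_nat_add of_nat_mult) simp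
    finally have "(of_nat k :: 'a) = of_nat (k mod 3)" .
    moreover have "k mod 3 = 0 \<or> k mod 3 = 1 \<or> k mod 3 = 2"
      by linarith
    ultimately show ?thesis
      by auto
  qed
  moreover have "{0, 1, 2::'a} \<subseteq> prime_subfield"
    unfolding prime_subfield_def by (metis empty_subsetI insert_subset of_nat_0 of_nat_1 of_nat_numeral rangeI)
  ultimately show ?thesis
    unfolding prime_subfield_def by auto
qed

lemma prime_subfield_iff_cube_eq: "(x::'a) \<in> prime_subfield \<longleftrightarrow> x ^ 3 = x"
proof -
  have "x ^ 3 - x = x * (x - 1) * (x - 2) + 3 * (x * x - x)"
    by (simp add: power3_eq_cube algebra_simps)
  then have "x ^ 3 - x = x * (x - 1) * (x - 2)"
    using three_eq_0 by simp
  then have "x ^ 3 = x \<longleftrightarrow> x * (x - 1) * (x - 2) = 0"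
    by (metis right_minus_eq)
  then show ?thesis
    unfolding prime_subfield_eq by auto
qed

lemma card_prime_subfield: "card (prime_subfield :: 'a set) = 3"
proof -
  have three: "(3::'a) = 2 + 1"
    by simp
  have "(2::'a) \<noteq> 0"
    using three three_eq_0 by (metis add_0 zero_neq_one)
  moreover have "(2::'a) \<noteq> 1"
    using three three_eq_0 by (metis add_0 add_right_cancel zero_neq_one one_add_one)
  ultimately show ?thesis
    unfolding prime_subfield_eq by simp
qed

lemma frob3_add: "frob3 ((p::'a poly) + q) = frob3 p + frob3 q"
  by (rule poly_eqI) (simp add: coeff_frob3 cube_add)

lemma frob3_diff: "frob3 ((p::'a poly) - q) = frob3 p - frob3 q"
  by (rule poly_eqI) (simp add: coeff_frob3 cube_diff)

lemma frob3_mult: "frob3 ((p::'a poly) * q) = frob3 p * frob3 q"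
proof (induction p)
  case (pCons a p)
  have "frob3 (smult a q) = smult (a ^ 3) (frob3 q)"
    by (rule poly_eqI) (simp add: coeff_frob3 power_mult_distrib)
  moreover have "frob3 (pCons b r) = pCons (b ^ 3) (frob3 r)" for b and r :: "'a poly"
    by (rule poly_eqI) (simp add: coeff_frob3 coeff_pCons split: nat.split)
  ultimately show ?case
    using pCons.IH by (simp add: frob3_add)
qed (simp add: frob3_def)

lemma frob3_prod: "frob3 (\<Prod>x\<in>A. f x :: 'a poly) = (\<Prod>x\<in>A. frob3 (f x))"
  by (induction A rule: infinite_finite_induct) (simp_all add: frob3_mult frob3_def[of 1])

lemma prime_polys_iff_frob3: "(p::'a poly) \<in> prime_polys \<longleftrightarrow> frob3 p = p"
  unfolding prime_polys_def by (auto simp: prime_subfield_iff_cube_eq coeff_frob3 poly_eq_iff)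

lemma prime_polys_add: "(p::'a poly) \<in> prime_polys \<Longrightarrow> q \<in> prime_polys \<Longrightarrow> p + q \<in> prime_polys"
  by (simp add: prime_polys_iff_frob3 frob3_add)

lemma prime_polys_diff: "(p::'a poly) \<in> prime_polys \<Longrightarrow> q \<in> prime_polys \<Longrightarrow> p - q \<in> prime_polys"
  by (simp add: prime_polys_iff_frob3 frob3_diff)

lemma prime_polys_mult: "(p::'a poly) \<in> prime_polys \<Longrightarrow> q \<in> prime_polys \<Longrightarrow> p * q \<in> prime_polys"
  by (simp add: prime_polys_iff_frob3 frob3_mult)

lemma monom_1_in_prime_polys: "monom (1::'a) k \<in> prime_polys"
  unfolding prime_polys_def by (auto simp: coeff_monom prime_subfield_eq)

lemma one_in_prime_polys: "(1::'a poly) \<in> prime_polys"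
  using monom_1_in_prime_polys[of 0] by (simp add: one_pCons)

text \<open>Division with remainder is unique and commutes with the Frobenius map, so it stays
  inside \<open>GF(3)[x]\<close>.\<close>
lemma prime_polys_div_mod:
  fixes a b :: "'a poly"
  assumes "a \<in> prime_polys" "b \<in> prime_polys"
  shows "a div b \<in> prime_polys" and "a mod b \<in> prime_polys"
proof -
  have "a div b \<in> prime_polys \<and> a mod b \<in> prime_polys"
  proof (cases "b = 0")
    case False
    have fixed: "frob3 a = a" "frob3 b = b"
      using assms by (simp_all add: prime_polys_iff_frob3)
    have "frob3 a = frob3 (a div b) * frob3 b + frob3 (a mod b)"
      by (metis div_mult_mod_eq frob3_add frob3_mult)
    then have a_eq: "a = frob3 (a div b) * b + frob3 (a mod b)"
      using fixed by simp
    have "frob3 (a mod b) = 0 \<or> degree (frob3 (a mod b)) < degree b"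
      using degree_mod_less[OF False, of a]
      by (cases "a mod b = 0") (simp_all add: degree_frob3 frob3_def[of 0])
    then have "frob3 (a mod b) div b = 0" and "frob3 (a mod b) mod b = frob3 (a mod b)"
      by (auto simp: div_poly_less mod_poly_less)
    then have "a div b = frob3 (a div b)" and "a mod b = frob3 (a mod b)"
      using a_eq False by (metis add.commute add_0 div_mult_self1, metis add.commute mod_mult_self1)
    then show ?thesis
      by (simp add: prime_polys_iff_frob3)
  qed (use assms in simp)
  then show "a div b \<in> prime_polys" and "a mod b \<in> prime_polys"
    by simp_all
qed

lemma card_ambient: "card (ambient k :: 'a poly set) = 3 ^ k"
proof -
  let ?L = "{xs. set xs \<subseteq> (prime_subfield::'a set) \<and> length xs = k}"
  have "bij_betw Poly ?L (ambient k)"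
  proof (rule bij_betw_byWitness[where f'="\<lambda>p. map (coeff p) [0..<k]"])
    show "Poly ` ?L \<subseteq> ambient k"
      unfolding ambient_def prime_polys_def
      by (auto simp: nth_default_def subset_iff)
    show "(\<lambda>p. map (coeff p) [0..<k]) ` ambient k \<subseteq> ?L"
      unfolding ambient_def prime_polys_def by auto
    show "\<forall>xs\<in>?L. map (coeff (Poly xs)) [0..<k] = xs"
      by (auto simp: nth_default_def intro: nth_equalityI)
    show "\<forall>p\<in>ambient k. Poly (map (coeff p) [0..<k]) = p"
      unfolding ambient_def by (auto simp: poly_eq_iff nth_default_def not_less)
  qed
  then have "card (ambient k :: 'a poly set) = card ?L"
    by (simp add: bij_betw_same_card)
  also have "\<dots> = 3 ^ k"
  proof -
    have "finite (prime_subfield :: 'a set)"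
      by (simp add: prime_subfield_eq)
    then show ?thesis
      using card_lists_length_eq[of "prime_subfield :: 'a set" k] card_prime_subfield by simp
  qed
  finally show ?thesis .
qed

lemma finite_ambient: "finite (ambient k :: 'a poly set)"
  using card_ambient[of k] card.infinite by fastforce

end

section \<open>Ternary weights\<close>

lemma wt3_eq: "wt3 i = i mod 3 + wt3 (i div 3)"
  by (cases "i = 0") simp_all

declare wt3.simps [simp del]

lemma wt3_0 [simp]: "wt3 0 = 0"
  by (simp add: wt3.simps)

lemma wt3_mult_3_add: "d < 3 \<Longrightarrow> wt3 (3 * q + d) = d + wt3 q"
  by (subst wt3_eq) simp

lemma wt3_less_3: "d < 3 \<Longrightarrow> wt3 d = d"
  using wt3_mult_3_add[of d 0] by simp

lemma wt3_5: "wt3 5 = 3"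
  using wt3_less_3[of 1] wt3_mult_3_add[of 2 1] by simp

lemma even_wt3_iff: "even (wt3 i) \<longleftrightarrow> even i"
proof (induction i rule: less_induct)
  case (less i)
  show ?case
  proof (cases "i = 0")
    case False
    have "i = 2 * (i div 3) + (i mod 3 + i div 3)"
      using div_mult_mod_eq[of i 3] by linarith
    then have "even i \<longleftrightarrow> even (i mod 3 + i div 3)"
      by (metis dvd_add_right_iff dvd_triv_left)
    then show ?thesis
      using less.IH[of "i div 3"] False by (simp add: wt3_eq[of i])
  qed simp
qed

lemma wt3_mult_power_add: "y < 3 ^ k \<Longrightarrow> wt3 (x * 3 ^ k + y) = wt3 x + wt3 y"
proof (induction k arbitrary: y)
  case (Suc k)
  have "x * 3 ^ Suc k + y = 3 * (x * 3 ^ k + y div 3) + y mod 3"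
    by simp
  then have "wt3 (x * 3 ^ Suc k + y) = y mod 3 + wt3 (x * 3 ^ k + y div 3)"
    by (metis wt3_mult_3_add mod_less_divisor zero_less_numeral)
  also have "\<dots> = y mod 3 + wt3 x + wt3 (y div 3)"
    using Suc by simp
  also have "\<dots> = wt3 x + wt3 y"
    using wt3_eq[of y] by simp
  finally show ?case .
qed simp

text \<open>Complementing every digit: \<open>3^h - 1 - t\<close> has digits \<open>2 - t\<^sub>j\<close>.\<close>
lemma wt3_complement: "t < 3 ^ h \<Longrightarrow> wt3 (3 ^ h - 1 - t) + wt3 t = 2 * h"
proof (induction h arbitrary: t)
  case (Suc h)
  have q: "t div 3 < 3 ^ h"
    using Suc.prems by simp
  have "(3::nat) ^ Suc h = 3 * 3 ^ h"
    by simp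
  then have eq: "3 ^ Suc h - 1 - t = 3 * (3 ^ h - 1 - t div 3) + (2 - t mod 3)"
    using q mod_less_divisor[of 3 t] div_mult_mod_eq[of t 3] by linarith
  have "wt3 (3 ^ Suc h - 1 - t) = (2 - t mod 3) + wt3 (3 ^ h - 1 - t div 3)"
    unfolding eq by (rule wt3_mult_3_add) simp
  moreover have "wt3 t = t mod 3 + wt3 (t div 3)"
    by (rule wt3_eq)
  moreover have "t mod 3 < 3"
    by simp
  ultimately show ?case
    using Suc.IH[OF q] by (simp only: mult_Suc_right) linarith
qed simp

text \<open>Multiplication by 3 modulo \<open>3^m - 1\<close> rotates the \<open>m\<close> ternary digits cyclically.\<close>
lemma wt3_mult_3_mod:
  assumes "0 < i" "i < 3 ^ m - 1"
  shows "0 < 3 * i mod (3 ^ m - 1)" and "wt3 (3 * i mod (3 ^ m - 1)) = wt3 i"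
proof -
  have "m \<noteq> 0"
    using assms by (intro notI) simp
  define K where "K = (3::nat) ^ (m - 1)"
  have K: "3 ^ m = 3 * K"
    using \<open>m \<noteq> 0\<close> unfolding K_def by (cases m) simp_all
  define a d where "a = i mod K" and "d = i div K"
  have i: "i = d * K + a"
    unfolding a_def d_def by simp
  have "a < K"
    unfolding a_def K_def by simp
  have "d < 3"
    using assms K unfolding d_def by (simp add: div_less_iff_less_mult)
  have "3 * a + d < 3 ^ m - 1"
  proof -
    have "3 * a + d \<noteq> 3 ^ m - 1"
    proof
      assume "3 * a + d = 3 ^ m - 1"
      then have "d = 2" "a = K - 1"
        using K \<open>a < K\<close> \<open>d < 3\<close> by linarith+
      then show False
        using assms i K by simp
    qed
    then show ?thesis
      using K \<open>a < K\<close> \<open>d < 3\<close> by linarith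
  qed
  moreover have "3 * i = (3 * a + d) + d * (3 ^ m - 1)"
  proof -
    obtain M where "(3::nat) ^ m = Suc M"
      using gr0_implies_Suc[of "3 ^ m"] by auto
    then have "d * 3 ^ m = d + d * (3 ^ m - 1)"
      by simp
    then show ?thesis
      using i K by (simp add: algebra_simps)
  qed
  ultimately have rot: "3 * i mod (3 ^ m - 1) = 3 * a + d"
    by simp
  show "0 < 3 * i mod (3 ^ m - 1)"
    using assms i unfolding rot by (cases "a = 0") auto
  have "wt3 i = d + wt3 a"
    using wt3_mult_power_add[of a "m - 1" d] \<open>a < K\<close> wt3_less_3[OF \<open>d < 3\<close>]
    unfolding i K_def by simp
  then show "wt3 (3 * i mod (3 ^ m - 1)) = wt3 i"
    unfolding rot using wt3_mult_3_add[OF \<open>d < 3\<close>, of a] by simp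
qed

lemma add_mod_4_eq_iff:
  fixes w r :: nat
  assumes "r < 4"
  shows "(1 + w) mod 4 = r \<longleftrightarrow> w mod 4 = (r + 3) mod 4"
    and "(2 + w) mod 4 = r \<longleftrightarrow> w mod 4 = (r + 2) mod 4"
proof -
  have mod_eq: "(1 + w) mod 4 = (1 + w mod 4) mod 4" "(2 + w) mod 4 = (2 + w mod 4) mod 4"
    by (rule mod_add_right_eq[symmetric])+
  have "w mod 4 < 4"
    by simp
  then have "w mod 4 = 0 \<or> w mod 4 = 1 \<or> w mod 4 = 2 \<or> w mod 4 = 3"
    and "r = 0 \<or> r = 1 \<or> r = 2 \<or> r = 3"
    using assms by linarith+
  then show "(1 + w) mod 4 = r \<longleftrightarrow> w mod 4 = (r + 3) mod 4"
    and "(2 + w) mod 4 = r \<longleftrightarrow> w mod 4 = (r + 2) mod 4"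
    unfolding mod_eq by (elim disjE; simp)+
qed

lemma odd_iff_mod_4: "odd (w::nat) \<longleftrightarrow> w mod 4 = 1 \<or> w mod 4 = 3"
proof -
  have "w mod 4 < 4"
    by simp
  then have "w mod 4 = 0 \<or> w mod 4 = 1 \<or> w mod 4 = 2 \<or> w mod 4 = 3"
    by linarith
  moreover have "odd w \<longleftrightarrow> odd (w mod 4)"
    by (simp add: dvd_mod_iff)
  ultimately show ?thesis
    by (elim disjE) simp_all
qed

lemma complement_mod_4:
  fixes w h j :: nat
  assumes "w \<le> 4 * h + 2" "w mod 4 = j" "j = 1 \<or> j = 3"
  shows "(4 * h + 2 - w) mod 4 = j"
proof -
  define q where "q = w div 4"
  have w: "w = 4 * q + j"
    using assms(2) div_mult_mod_eq[of w 4] unfolding q_def by linarith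
  show ?thesis
    using assms(3)
  proof
    assume "j = 1"
    then have "4 * h + 2 - w = 4 * (h - q) + 1"
      using w assms(1) by simp
    then show ?thesis
      using \<open>j = 1\<close> by simp
  next
    assume "j = 3"
    then have "4 * h + 2 - w = 4 * (h - q - 1) + 3"
      using w assms(1) by simp
    then show ?thesis
      using \<open>j = 3\<close> by simp
  qed
qed

lemma one_add_2_mult_mod_4: "(1 + 2 * h) mod 4 = (if even h then 1 else 3)" for h :: nat
  by (cases "even h") (auto elim!: evenE oddE)

lemma three_add_2_mult_mod_4: "(3 + 2 * h) mod 4 = (if even h then 3 else 1)" for h :: nat
  by (cases "even h") (auto elim!: evenE oddE)

definition wt3_count :: "nat \<Rightarrow> nat \<Rightarrow> int" where
  "wt3_count m r = (\<Sum>i<3 ^ m. of_bool (wt3 i mod 4 = r))"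

lemma wt3_count_eq_card: "wt3_count m r = int (card {i. i < 3 ^ m \<and> wt3 i mod 4 = r})"
proof -
  have "{i. i < 3 ^ m \<and> wt3 i mod 4 = r} = {i \<in> {..<3 ^ m}. wt3 i mod 4 = r}"
    by auto
  then show ?thesis
    unfolding wt3_count_def by (simp add: sum.inter_filter[symmetric] of_bool_def)
qed

lemma wt3_count_Suc:
  assumes "r < 4"
  shows "wt3_count (Suc m) r = wt3_count m r + wt3_count m ((r + 3) mod 4) + wt3_count m ((r + 2) mod 4)"
proof -
  let ?f = "\<lambda>i. of_bool (wt3 i mod 4 = r) :: int"
  have "wt3_count (Suc m) r = (\<Sum>i<3 ^ m * 3. ?f i)"
    unfolding wt3_count_def by (simp only: power_Suc2)
  also have "\<dots> = (\<Sum>q<3 ^ m. \<Sum>i\<in>{q * 3..<q * 3 + 3}. ?f i)"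
    by (rule sum.nat_group[symmetric])
  also have "\<dots> = (\<Sum>q<3 ^ m. ?f (3 * q) + ?f (3 * q + 1) + ?f (3 * q + 2))"
    by (intro sum.cong refl) (simp add: numeral_3_eq_3 mult.commute add.assoc del: sum_of_bool_eq)
  also have "\<dots> = (\<Sum>q<3 ^ m. of_bool (wt3 q mod 4 = r) + of_bool (wt3 q mod 4 = (r + 3) mod 4)
      + of_bool (wt3 q mod 4 = (r + 2) mod 4))"
  proof (rule sum.cong[OF refl])
    fix q
    have "wt3 (3 * q) = wt3 q" "wt3 (3 * q + 1) = 1 + wt3 q" "wt3 (3 * q + 2) = 2 + wt3 q"
      using wt3_mult_3_add[of 0 q] wt3_mult_3_add[of 1 q] wt3_mult_3_add[of 2 q] by simp_all
    then show "?f (3 * q) + ?f (3 * q + 1) + ?f (3 * q + 2) = of_bool (wt3 q mod 4 = r)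
      + of_bool (wt3 q mod 4 = (r + 3) mod 4) + of_bool (wt3 q mod 4 = (r + 2) mod 4)"
      using add_mod_4_eq_iff[OF assms] by simp
  qed
  also have "\<dots> = wt3_count m r + wt3_count m ((r + 3) mod 4) + wt3_count m ((r + 2) mod 4)"
    unfolding wt3_count_def by (simp add: sum.distrib)
  finally show ?thesis .
qed

lemma wt3_count_0: "wt3_count 0 r = of_bool (r = 0)"
  by (simp add: wt3_count_def)

lemma wt3_count_Suc_cases:
  "wt3_count (Suc m) 0 = wt3_count m 0 + wt3_count m 3 + wt3_count m 2"
  "wt3_count (Suc m) 1 = wt3_count m 1 + wt3_count m 0 + wt3_count m 3"
  "wt3_count (Suc m) 2 = wt3_count m 2 + wt3_count m 1 + wt3_count m 0"
  "wt3_count (Suc m) 3 = wt3_count m 3 + wt3_count m 2 + wt3_count m 1"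
proof -
  have "(0::nat) < 4" "(1::nat) < 4" "(2::nat) < 4" "(3::nat) < 4"
    and "(0 + 3) mod 4 = (3::nat)" "(0 + 2) mod 4 = (2::nat)" "(1 + 3) mod 4 = (0::nat)"
    "(1 + 2) mod 4 = (3::nat)" "(2 + 3) mod 4 = (1::nat)" "(2 + 2) mod 4 = (0::nat)"
    "(3 + 3) mod 4 = (2::nat)" "(3 + 2) mod 4 = (1::nat)"
    by simp_all
  then show "wt3_count (Suc m) 0 = wt3_count m 0 + wt3_count m 3 + wt3_count m 2"
    "wt3_count (Suc m) 1 = wt3_count m 1 + wt3_count m 0 + wt3_count m 3"
    "wt3_count (Suc m) 2 = wt3_count m 2 + wt3_count m 1 + wt3_count m 0"
    "wt3_count (Suc m) 3 = wt3_count m 3 + wt3_count m 2 + wt3_count m 1"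
    by (simp_all only: wt3_count_Suc)
qed

text \<open>For \<open>\<zeta>\<^sup>4 = 1\<close> one has \<open>\<Sum>\<^sub>r wt3_count m r \<zeta>\<^sup>r = (1 + \<zeta> + \<zeta>\<^sup>2)\<^sup>m\<close>; the
  following identities are the cases \<open>\<zeta> = 1\<close>, \<open>\<zeta> = -1\<close> and \<open>\<zeta> = \<i>\<close>.\<close>

lemma wt3_count_total: "wt3_count m 0 + wt3_count m 1 + wt3_count m 2 + wt3_count m 3 = 3 ^ m"
proof (induction m)
  case (Suc m)
  then show ?case
    using wt3_count_Suc_cases[of m] by simp
qed (simp add: wt3_count_0)

lemma wt3_count_alternating: "wt3_count m 0 - wt3_count m 1 + wt3_count m 2 - wt3_count m 3 = 1"
proof (induction m)
  case (Suc m)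
  then show ?case
    using wt3_count_Suc_cases[of m] by linarith
qed (simp add: wt3_count_0)

lemma wt3_count_even:
  "wt3_count (2 * h) 0 - wt3_count (2 * h) 2 = (-1) ^ h \<and> wt3_count (2 * h) 1 = wt3_count (2 * h) 3"
proof (induction h)
  case (Suc h)
  have "2 * Suc h = Suc (Suc (2 * h))"
    by simp
  then show ?case
    using Suc.IH wt3_count_Suc_cases[of "2 * h"] wt3_count_Suc_cases[of "Suc (2 * h)"] by simp
qed (simp add: wt3_count_0)

lemma wt3_count_odd:
  "4 * wt3_count (2 * h + 1) 1 = 3 ^ (2 * h + 1) - 1 + 2 * (-1) ^ h"
  "4 * wt3_count (2 * h + 1) 3 = 3 ^ (2 * h + 1) - 1 - 2 * (-1) ^ h"
proof -
  have "wt3_count (2 * h + 1) 1 - wt3_count (2 * h + 1) 3 = (-1) ^ h"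
    using wt3_count_even[of h] wt3_count_Suc_cases[of "2 * h"] by simp
  then show "4 * wt3_count (2 * h + 1) 1 = 3 ^ (2 * h + 1) - 1 + 2 * (-1) ^ h"
    and "4 * wt3_count (2 * h + 1) 3 = 3 ^ (2 * h + 1) - 1 - 2 * (-1) ^ h"
    using wt3_count_alternating[of "2 * h + 1"] wt3_count_total[of "2 * h + 1"] by linarith+
qed

section \<open>Polynomial codes: the BCH bound and duality\<close>

lemma prod_linear_dvd_if_roots:
  fixes p :: "'a::field poly"
  assumes "finite A" and "\<And>a. a \<in> A \<Longrightarrow> poly p a = 0"
  shows "(\<Prod>a\<in>A. [:- a, 1:]) dvd p"
  using assms
proof (induction A arbitrary: p rule: finite_induct)
  case (insert a A)
  obtain q where q: "p = [:- a, 1:] * q"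
    using insert.prems poly_eq_0_iff_dvd by (metis dvdE insertI1)
  have "poly q b = 0" if "b \<in> A" for b
    using insert.prems[of b] insert.hyps(2) that q by auto
  then have "(\<Prod>a\<in>A. [:- a, 1:]) dvd q"
    using insert.IH by blast
  then show ?case
    unfolding prod.insert[OF insert.hyps] q by (rule mult_dvd_mono[OF dvd_refl])
qed simp

lemma monic_dvd_eq_if_degree_eq:
  fixes p q :: "'a::field poly"
  assumes "p dvd q" "q \<noteq> 0" "degree p = degree q" "lead_coeff p = 1" "lead_coeff q = 1"
  shows "p = q"
proof -
  obtain r where r: "q = p * r"
    using assms(1) by blast
  then have "r \<noteq> 0" "p \<noteq> 0"
    using assms(2) by auto
  then have "degree r = 0"
    using r assms(3) by (simp add: degree_mult_eq)
  then obtain c where c: "r = [:c:]"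
    by (metis degree_eq_zeroE)
  have "lead_coeff q = lead_coeff p * c"
    using r c by (simp add: lead_coeff_mult)
  then have "c = 1"
    using assms(4,5) by simp
  then show ?thesis
    using r c by simp
qed

lemma poly_eq_sum_lessThan:
  fixes p :: "'a::comm_semiring_1 poly"
  assumes "\<forall>i\<ge>n. coeff p i = 0"
  shows "poly p x = (\<Sum>i<n. coeff p i * x ^ i)"
proof (cases "p = 0")
  case False
  then have "degree p < n"
    using assms by (metis leading_coeff_0_iff not_le)
  then have "(\<Sum>i<n. coeff p i * x ^ i) = (\<Sum>i\<le>degree p. coeff p i * x ^ i)"
    by (intro sum.mono_neutral_right) (auto simp: coeff_eq_0)
  then show ?thesis
    using poly_altdef[of p x] by simp
qed simp

text \<open>The Vandermonde matrix of distinct points is invertible: pair the power sums with the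
  coefficients of the polynomial vanishing at all points but \<open>z p\<^sub>0\<close>.\<close>
lemma power_sums_eq_0_imp_eq_0:
  fixes a z :: "'b \<Rightarrow> 'a::field"
  assumes "finite Q" "card Q \<le> R" "inj_on z Q" "p\<^sub>0 \<in> Q"
    and sums: "\<And>t. t < R \<Longrightarrow> (\<Sum>p\<in>Q. a p * z p ^ t) = 0"
  shows "a p\<^sub>0 = 0"
proof -
  define L where "L = (\<Prod>p\<in>Q - {p\<^sub>0}. [:- z p, 1:])"
  have "degree L = card Q - 1"
    unfolding L_def using assms(1,4) by (simp add: degree_prod_sum_eq)
  moreover have "card Q > 0"
    using assms(1,4) card_gt_0_iff by blast
  ultimately have deg_L: "degree L < R"
    using assms(2) by linarith
  have "0 = (\<Sum>t\<le>degree L. coeff L t * (\<Sum>p\<in>Q. a p * z p ^ t))"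
    using sums deg_L by simp
  also have "\<dots> = (\<Sum>p\<in>Q. a p * poly L (z p))"
    by (simp add: poly_altdef sum_distrib_left sum_distrib_right sum.swap[of _ Q] algebra_simps)
  also have "\<dots> = (\<Sum>p\<in>{p\<^sub>0}. a p * poly L (z p))"
    by (rule sum.mono_neutral_right) (use assms(1,4) in \<open>auto simp: L_def poly_prod prod_zero_iff\<close>)
  finally have "a p\<^sub>0 * poly L (z p\<^sub>0) = 0"
    by simp
  moreover have "poly L (z p\<^sub>0) \<noteq> 0"
    using assms(1,3,4) unfolding L_def by (auto simp: poly_prod prod_zero_iff inj_on_def)
  ultimately show ?thesis
    by simp
qed

definition hamming_weight :: "nat \<Rightarrow> 'a::zero poly \<Rightarrow> nat" where
  "hamming_weight n c = card {i. i < n \<and> coeff c i \<noteq> 0}"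

lemma hamming_dist_eq_weight:
  fixes c c' :: "'a::ab_group_add poly"
  shows "hamming_dist n c c' = hamming_weight n (c - c')"
  unfolding hamming_dist_def hamming_weight_def by simp

lemma bch_bound:
  fixes c :: "'a::field poly"
  assumes "c \<noteq> 0" "\<forall>i\<ge>n. coeff c i = 0" "\<gamma> \<noteq> 0" "inj_on (\<lambda>i. \<delta> ^ i) {..<n}"
    and roots: "\<And>t. t < R \<Longrightarrow> poly c (\<gamma> * \<delta> ^ t) = 0"
  shows "R < hamming_weight n c"
proof (rule ccontr)
  assume "\<not> R < hamming_weight n c"
  define Q where "Q = {i. i < n \<and> coeff c i \<noteq> 0}"
  have "card Q \<le> R"
    using \<open>\<not> R < hamming_weight n c\<close> unfolding Q_def hamming_weight_def by simp
  obtain p where "coeff c p \<noteq> 0"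
    using \<open>c \<noteq> 0\<close> by (metis leading_coeff_0_iff)
  then have p: "p \<in> Q"
    using assms(2) leI unfolding Q_def by blast
  have sums: "(\<Sum>i\<in>Q. (coeff c i * \<gamma> ^ i) * (\<delta> ^ i) ^ t) = 0" if "t < R" for t
  proof -
    have "(\<gamma> * \<delta> ^ t) ^ i = \<gamma> ^ i * (\<delta> ^ i) ^ t" for i
      by (simp add: power_mult_distrib mult.commute flip: power_mult)
    then have "(\<Sum>i\<in>Q. (coeff c i * \<gamma> ^ i) * (\<delta> ^ i) ^ t) = (\<Sum>i\<in>Q. coeff c i * (\<gamma> * \<delta> ^ t) ^ i)"
      by (simp add: mult.assoc)
    also have "\<dots> = (\<Sum>i<n. coeff c i * (\<gamma> * \<delta> ^ t) ^ i)"
      by (rule sum.mono_neutral_left) (auto simp: Q_def)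
    also have "\<dots> = 0"
      using roots[OF that] poly_eq_sum_lessThan[OF assms(2)] by simp
    finally show ?thesis .
  qed
  have "finite Q"
    unfolding Q_def by simp
  moreover have "inj_on (\<lambda>i. \<delta> ^ i) Q"
    using assms(4) by (rule inj_on_subset) (auto simp: Q_def)
  ultimately have "coeff c p * \<gamma> ^ p = 0"
    using power_sums_eq_0_imp_eq_0[of Q R "\<lambda>i. \<delta> ^ i" p "\<lambda>i. coeff c i * \<gamma> ^ i"]
      \<open>card Q \<le> R\<close> p sums by blast
  then show False
    using \<open>coeff c p \<noteq> 0\<close> \<open>\<gamma> \<noteq> 0\<close> by simp
qed

lemma min_dist_ge_if_weight_ge:
  fixes C :: "'a::ab_group_add poly set"
  assumes diff: "\<And>c c'. c \<in> C \<Longrightarrow> c' \<in> C \<Longrightarrow> c - c' \<in> C"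
    and "c\<^sub>0 \<in> C" "c\<^sub>1 \<in> C" "c\<^sub>0 \<noteq> c\<^sub>1"
    and weight: "\<And>c. c \<in> C \<Longrightarrow> c \<noteq> 0 \<Longrightarrow> D \<le> hamming_weight n c"
  shows "D \<le> min_dist n C"
proof -
  let ?H = "{hamming_dist n c c' | c c'. c \<in> C \<and> c' \<in> C \<and> c \<noteq> c'}"
  have "?H \<subseteq> {..n}"
    unfolding hamming_dist_def by (auto intro: order_trans[OF card_mono[of "{..<n}"]])
  then have "finite ?H"
    by (rule finite_subset) simp
  moreover have "?H \<noteq> {}"
    using assms(2-4) by blast
  moreover have "D \<le> x" if "x \<in> ?H" for x
    using that diff weight by (auto simp: hamming_dist_eq_weight)
  ultimately show ?thesis
    unfolding min_dist_def by simp
qed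

lemma inner_eq_coeff_mult_reflect_poly:
  assumes "degree v < n"
  shows "(\<Sum>i<n. coeff c i * coeff v i) = coeff (c * reflect_poly v) (degree v)"
proof -
  have "(\<Sum>i<n. coeff c i * coeff v i) = (\<Sum>i\<le>degree v. coeff c i * coeff v i)"
    using assms by (intro sum.mono_neutral_right) (auto simp: coeff_eq_0)
  also have "\<dots> = (\<Sum>i\<le>degree v. coeff c i * coeff (reflect_poly v) (degree v - i))"
    by (intro sum.cong refl) (auto simp: coeff_reflect_poly)
  also have "\<dots> = coeff (c * reflect_poly v) (degree v)"
    by (simp add: coeff_mult)
  finally show ?thesis .
qed

text \<open>A multiple of \<open>x\<^sup>n + 1\<close> of degree below \<open>n + degree v\<close> has no term \<open>x\<^bsup>degree v\<^esup>\<close>.\<close>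
lemma inner_eq_0_if_xn_plus_1_dvd:
  fixes c v :: "'a::field poly"
  assumes "degree c < n" "degree v < n" "monom 1 n + 1 dvd c * reflect_poly v"
  shows "(\<Sum>i<n. coeff c i * coeff v i) = 0"
proof -
  obtain q where q: "c * reflect_poly v = (monom 1 n + 1) * q"
    using assms(3) by blast
  have deg_xn1: "degree (monom 1 n + 1 :: 'a poly) = n"
    using assms(2) by (simp add: degree_add_eq_left degree_monom_eq)
  have "coeff ((monom 1 n + 1) * q) (degree v) = 0"
  proof (cases "q = 0")
    case False
    then have "n + degree q = degree (c * reflect_poly v)"
      using q deg_xn1 by (metis degree_mult_eq mult_eq_0_iff degree_0 add_0 not_less_zero assms(2))
    also have "\<dots> \<le> degree c + degree v"
      using degree_mult_le[of c "reflect_poly v"] degree_reflect_poly_le[of v] by linarith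
    finally have "degree q < degree v"
      using assms(1) by linarith
    then show ?thesis
      using assms(2) by (simp add: distrib_right coeff_monom_mult coeff_eq_0)
  qed simp
  then show ?thesis
    using inner_eq_coeff_mult_reflect_poly[OF assms(2)] q by simp
qed

text \<open>The shifts \<open>x\<^sup>k g\<close> form a triangular system, so a vector orthogonal to all of them
  is determined by its first \<open>degree g\<close> coordinates.\<close>
lemma orthogonal_to_shifts_imp_eq_0:
  fixes g w :: "'a::field poly"
  assumes "g \<noteq> 0"
    and orth: "\<And>k. k + degree g < n \<Longrightarrow> (\<Sum>i<n. coeff w i * coeff (monom 1 k * g) i) = 0"
    and low: "\<And>i. i < degree g \<Longrightarrow> coeff w i = 0"
    and high: "\<And>i. n \<le> i \<Longrightarrow> coeff w i = 0"
  shows "w = 0"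
proof -
  have "coeff w i = 0" if "i < n" for i
    using that
  proof (induction i rule: less_induct)
    case (less i)
    show ?case
    proof (cases "i < degree g")
      case False
      define k where "k = i - degree g"
      have i: "i = k + degree g"
        using False unfolding k_def by simp
      have deg: "degree (monom 1 k * g) = i"
        using \<open>g \<noteq> 0\<close> i by (simp add: degree_mult_eq degree_monom_eq)
      have "(\<Sum>j<n. coeff w j * coeff (monom 1 k * g) j) = (\<Sum>j\<in>{i}. coeff w j * coeff (monom 1 k * g) j)"
      proof (rule sum.mono_neutral_right)
        show "\<forall>j\<in>{..<n} - {i}. coeff w j * coeff (monom 1 k * g) j = 0"
        proof
          fix j
          assume j: "j \<in> {..<n} - {i}"
          show "coeff w j * coeff (monom 1 k * g) j = 0"
          proof (cases "j < i")
            case False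
            then have "degree (monom 1 k * g) < j"
              using j deg by simp
            then show ?thesis
              by (simp add: coeff_eq_0)
          qed (use less.IH j in simp)
        qed
      qed (use less.prems in auto)
      then have "coeff w i * lead_coeff g = 0"
        using orth[of k] i less.prems by (simp add: coeff_monom_mult add.commute)
      then show ?thesis
        using \<open>g \<noteq> 0\<close> by simp
    qed (use low in simp)
  qed
  then show ?thesis
    using high by (metis leI poly_eqI coeff_0)
qed

definition poly_code :: "nat \<Rightarrow> 'a::field poly \<Rightarrow> 'a poly set" where
  "poly_code n g = {w \<in> ambient n. g dvd w}"

context char3
begin

lemma negacyclic_code_eq_poly_code:
  fixes g :: "'a poly"
  assumes g: "g \<in> prime_polys" "g dvd monom 1 n + 1" and "0 < n"
  shows "negacyclic_code n g = poly_code n g"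
proof -
  let ?M = "monom 1 n + 1 :: 'a poly"
  have deg_M: "degree ?M = n"
    using \<open>0 < n\<close> by (simp add: degree_add_eq_left degree_monom_eq)
  then have "?M \<noteq> 0"
    using \<open>0 < n\<close> by auto
  have M: "?M \<in> prime_polys"
    by (intro prime_polys_add monom_1_in_prime_polys one_in_prime_polys)
  show ?thesis
  proof (intro set_eqI iffI)
    fix w
    assume "w \<in> negacyclic_code n g"
    then obtain a where a: "a \<in> prime_polys" "w = (a * g) mod ?M"
      unfolding negacyclic_code_def by auto
    then have "w \<in> prime_polys"
      using prime_polys_div_mod(2)[OF prime_polys_mult[OF a(1) g(1)] M] by simp
    moreover have "w = 0 \<or> degree w < n"
      using a(2) degree_mod_less[OF \<open>?M \<noteq> 0\<close>] deg_M by metis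
    moreover have "g dvd w"
      using a(2) g(2) by (simp add: dvd_mod_iff)
    ultimately show "w \<in> poly_code n g"
      unfolding poly_code_def by (simp add: ambient_iff)
  next
    fix w
    assume "w \<in> poly_code n g"
    then have w: "w \<in> prime_polys" "w = 0 \<or> degree w < n" "g dvd w"
      unfolding poly_code_def by (auto simp: ambient_iff)
    then have "w = (w div g * g) mod ?M"
      using deg_M by (auto intro: mod_poly_less[symmetric])
    moreover have "w div g \<in> prime_polys"
      using prime_polys_div_mod(1)[OF w(1) g(1)] .
    ultimately show "w \<in> negacyclic_code n g"
      unfolding negacyclic_code_def by blast
  qed
qed

lemma finite_poly_code: "finite (poly_code n (g :: 'a poly))"
  using finite_ambient by (rule finite_subset[rotated]) (auto simp: poly_code_def)

lemma card_poly_code: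
  fixes g :: "'a poly"
  assumes g: "g \<in> prime_polys" "g \<noteq> 0" and "degree g \<le> n"
  shows "card (poly_code n g) = 3 ^ (n - degree g)"
proof -
  have "bij_betw (\<lambda>r. r * g) (ambient (n - degree g)) (poly_code n g)"
  proof (rule bij_betw_imageI)
    show "inj_on (\<lambda>r. r * g) (ambient (n - degree g))"
      using g(2) by (auto simp: inj_on_def)
    have degree_iff: "r = 0 \<or> degree (r * g) < n \<longleftrightarrow> r = 0 \<or> degree r < n - degree g" for r
      using g(2) \<open>degree g \<le> n\<close> by (cases "r = 0") (auto simp: degree_mult_eq)
    show "(\<lambda>r. r * g) ` ambient (n - degree g) = poly_code n g"
    proof (intro set_eqI iffI)
      fix w
      assume "w \<in> (\<lambda>r. r * g) ` ambient (n - degree g)"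
      then obtain r where r: "r \<in> prime_polys" "r = 0 \<or> degree r < n - degree g" "w = r * g"
        by (auto simp: ambient_iff)
      then have "r * g = 0 \<or> degree (r * g) < n"
        using degree_iff[of r] by auto
      then show "w \<in> poly_code n g"
        unfolding poly_code_def r(3) using r(1) g(1) by (simp add: ambient_iff prime_polys_mult)
    next
      fix w
      assume "w \<in> poly_code n g"
      then have "w \<in> prime_polys" "w = 0 \<or> degree w < n" "w = w div g * g"
        unfolding poly_code_def by (auto simp: ambient_iff)
      then show "w \<in> (\<lambda>r. r * g) ` ambient (n - degree g)"
        using degree_iff[of "w div g"] prime_polys_div_mod(1)[OF _ g(1), of w]
        by (auto simp: ambient_iff intro!: image_eqI[of _ _ "w div g"])
    qed
  qed
  then show ?thesis
    using card_ambient bij_betw_same_card by metis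
qed

lemma poly_code_diff:
  "w \<in> poly_code n g \<Longrightarrow> w' \<in> poly_code n g \<Longrightarrow> w - w' \<in> poly_code n (g :: 'a poly)"
  unfolding poly_code_def ambient_def by (auto intro: prime_polys_diff dvd_diff)

lemma zero_in_poly_code: "0 \<in> poly_code n (g :: 'a poly)"
  unfolding poly_code_def ambient_def prime_polys_def by simp

lemma monom_mult_in_poly_code:
  fixes g :: "'a poly"
  assumes "g \<in> prime_polys" "k + degree g < n"
  shows "monom 1 k * g \<in> poly_code n g"
proof -
  have "monom 1 k * g = 0 \<or> degree (monom 1 k * g) < n"
    using assms(2) by (cases "g = 0") (simp_all add: degree_mult_eq degree_monom_eq)
  then show ?thesis
    unfolding poly_code_def using assms(1)
    by (simp add: ambient_iff prime_polys_mult monom_1_in_prime_polys)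
qed

lemma finite_dual_code: "finite (dual_code n (C :: 'a poly set))"
  using finite_ambient by (rule finite_subset[rotated]) (auto simp: dual_code_def)

lemma dual_code_diff:
  "v \<in> dual_code n C \<Longrightarrow> v' \<in> dual_code n C \<Longrightarrow> v - v' \<in> dual_code n (C :: 'a poly set)"
  unfolding dual_code_def ambient_def
  by (auto intro: prime_polys_diff simp: left_diff_distrib sum_subtractf)

text \<open>Truncation to the first \<open>degree g\<close> coordinates is injective on the dual code.\<close>
lemma card_dual_code_le:
  fixes g :: "'a poly"
  assumes "g \<noteq> 0" and shifts: "\<And>k. k + degree g < n \<Longrightarrow> monom 1 k * g \<in> C"
  shows "card (dual_code n C) \<le> 3 ^ degree g"
proof -
  let ?d = "degree g"
  define trunc where "trunc v = Poly (map (coeff v) [0..<?d])" for v :: "'a poly"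
  have coeff_trunc: "coeff (trunc v) k = (if k < ?d then coeff v k else 0)" for v k
    unfolding trunc_def by (simp add: nth_default_def)
  have "inj_on trunc (dual_code n C)"
  proof (rule inj_onI)
    fix v v'
    assume v: "v \<in> dual_code n C" "v' \<in> dual_code n C" and "trunc v = trunc v'"
    have low: "coeff (v - v') k = 0" if "k < ?d" for k
    proof -
      have "coeff (trunc v) k = coeff (trunc v') k"
        using \<open>trunc v = trunc v'\<close> by simp
      then show ?thesis
        using that by (simp add: coeff_trunc)
    qed
    have "v - v' \<in> dual_code n C"
      using dual_code_diff[OF v] .
    then have "v - v' = 0"
      using orthogonal_to_shifts_imp_eq_0[OF \<open>g \<noteq> 0\<close>, of n "v - v'"] low shifts
      unfolding dual_code_def ambient_def by blast
    then show "v = v'"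
      by simp
  qed
  moreover have "trunc ` dual_code n C \<subseteq> ambient ?d"
    unfolding dual_code_def ambient_def prime_polys_def by (auto simp: coeff_trunc)
  ultimately have "card (dual_code n C) \<le> card (ambient ?d :: 'a poly set)"
    using card_inj_on_le finite_ambient by blast
  then show ?thesis
    by (simp add: card_ambient)
qed

end

section \<open>Defining sets in \<open>GF(3\<^sup>m)\<close>\<close>

locale gf3m =
  fixes \<beta> :: "'a::{field,finite}" and m :: nat
  assumes card_UNIV: "card (UNIV :: 'a set) = 3 ^ m"
    and primitive: "primitive_element \<beta>"
begin

sublocale char3 "TYPE('a)"
  by unfold_locales (rule three_eq_0_if_card_power_3[OF card_UNIV])

definition N :: nat where "N = 3 ^ m - 1"

definition n :: nat where "n = (3 ^ m - 1) div 2"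

definition defining_set :: "nat \<Rightarrow> nat set" where
  "defining_set j = {i. 1 \<le> i \<and> i \<le> 3 ^ m - 2 \<and> wt3 i mod 4 = j}"

definition odd_exps :: "nat set" where
  "odd_exps = {i. i < N \<and> odd i}"

lemma m_pos: "0 < m"
proof -
  have "card {0, 1::'a} \<le> card (UNIV :: 'a set)"
    by (rule card_mono) simp_all
  then show ?thesis
    using card_UNIV by (cases m) simp_all
qed

lemma N_eq: "N = 2 * n"
proof -
  have "even ((3::nat) ^ m - 1)"
    by (simp add: even_diff_nat)
  then show ?thesis
    unfolding N_def n_def by simp
qed

lemma n_pos: "0 < n"
proof -
  have "(3::nat) ^ 1 \<le> 3 ^ m"
    using m_pos by (intro power_increasing) simp_all
  then show ?thesis
    unfolding n_def by simp
qed

lemma beta_neq_0: "\<beta> \<noteq> 0"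
  using primitive unfolding primitive_element_def by simp

text \<open>Multiplication by \<open>\<beta>\<close> permutes the nonzero elements, whose product is therefore
  unchanged.\<close>
lemma beta_power_N: "\<beta> ^ N = 1"
proof -
  let ?A = "UNIV - {0::'a}"
  have "card ?A = N"
    unfolding N_def using card_UNIV by (simp add: card_Diff_singleton)
  have "(\<Prod>x\<in>?A. x) = (\<Prod>x\<in>?A. \<beta> * x)"
    by (rule prod.reindex_bij_witness[of _ "\<lambda>x. \<beta> * x" "\<lambda>x. x / \<beta>"]) (auto simp: beta_neq_0)
  also have "\<dots> = \<beta> ^ N * (\<Prod>x\<in>?A. x)"
    using \<open>card ?A = N\<close> by (simp add: prod.distrib)
  finally show ?thesis
    by (simp add: prod_zero_iff)
qed

lemma beta_power_mod_N: "\<beta> ^ k = \<beta> ^ (k mod N)"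
proof -
  have "\<beta> ^ k = \<beta> ^ (N * (k div N) + k mod N)"
    by simp
  also have "\<dots> = (\<beta> ^ N) ^ (k div N) * \<beta> ^ (k mod N)"
    by (simp only: power_add power_mult)
  finally show ?thesis
    by (simp add: beta_power_N)
qed

lemma inj_on_beta_power: "inj_on (\<lambda>i. \<beta> ^ i) {..<N}"
proof -
  have "UNIV - {0} \<subseteq> (\<lambda>i. \<beta> ^ i) ` {..<N}"
  proof
    fix x :: 'a
    assume "x \<in> UNIV - {0}"
    then obtain i where "x = \<beta> ^ i"
      using primitive unfolding primitive_element_def by auto
    then show "x \<in> (\<lambda>i. \<beta> ^ i) ` {..<N}"
      using N_eq n_pos beta_power_mod_N[of i] by auto
  qed
  then have "card (UNIV - {0::'a}) \<le> card ((\<lambda>i. \<beta> ^ i) ` {..<N})"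
    by (intro card_mono) simp_all
  moreover have "card (UNIV - {0::'a}) = N"
    unfolding N_def using card_UNIV by (simp add: card_Diff_singleton)
  moreover have "card ((\<lambda>i. \<beta> ^ i) ` {..<N}) \<le> N"
    using card_image_le[of "{..<N}" "\<lambda>i. \<beta> ^ i"] by simp
  ultimately show ?thesis
    by (intro eq_card_imp_inj_on) simp_all
qed

lemma beta_power_eq_iff: "\<beta> ^ a = \<beta> ^ b \<longleftrightarrow> a mod N = b mod N"
proof -
  have "a mod N \<in> {..<N}" "b mod N \<in> {..<N}"
    using N_eq n_pos by simp_all
  then show ?thesis
    using inj_on_beta_power beta_power_mod_N[of a] beta_power_mod_N[of b] by (metis inj_on_eq_iff)
qed

lemma beta_power_n: "\<beta> ^ n = -1"
proof -
  have "\<beta> ^ n * \<beta> ^ n = 1"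
    using beta_power_N N_eq by (simp add: mult_2 flip: power_add)
  then have "(\<beta> ^ n - 1) * (\<beta> ^ n + 1) = 0"
    by (simp add: algebra_simps)
  moreover have "\<beta> ^ n \<noteq> \<beta> ^ 0"
    unfolding beta_power_eq_iff using N_eq n_pos by simp
  ultimately show ?thesis
    by (simp add: eq_neg_iff_add_eq_0)
qed

lemma inverse_beta_power:
  assumes "i \<le> N"
  shows "inverse (\<beta> ^ i) = \<beta> ^ (N - i)"
proof -
  have "\<beta> ^ i * \<beta> ^ (N - i) = 1"
    using assms beta_power_N by (simp flip: power_add)
  then show ?thesis
    by (rule inverse_unique)
qed

lemma defining_set_subset: "defining_set j \<subseteq> {..<N}"
proof -
  have "(3::nat) ^ 1 \<le> 3 ^ m"
    using m_pos by (intro power_increasing) simp_all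
  then show ?thesis
    unfolding defining_set_def N_def by auto
qed

lemma finite_defining_set: "finite (defining_set j)"
  using defining_set_subset by (rule finite_subset) simp

lemma odd_exps_eq_Un: "odd_exps = defining_set 1 \<union> defining_set 3"
proof (intro set_eqI)
  fix i
  have "i < N \<longleftrightarrow> i \<le> 3 ^ m - 2"
    using N_eq n_pos unfolding N_def by linarith
  moreover have "odd i \<longleftrightarrow> wt3 i mod 4 = 1 \<or> wt3 i mod 4 = 3"
    using odd_iff_mod_4[of "wt3 i"] even_wt3_iff[of i] by simp
  moreover have "odd i \<Longrightarrow> 1 \<le> i"
    by (simp add: odd_pos Suc_le_eq)
  ultimately show "i \<in> odd_exps \<longleftrightarrow> i \<in> defining_set 1 \<union> defining_set 3"
    unfolding odd_exps_def defining_set_def by auto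
qed

lemma defining_sets_disjoint: "defining_set 1 \<inter> defining_set 3 = {}"
  by (auto simp: defining_set_def)


lemma odd_exps_subset: "odd_exps \<subseteq> {..<N}"
  unfolding odd_exps_def by auto

lemma card_odd_exps: "card odd_exps = n"
proof -
  have "odd_exps = (\<lambda>k. 2 * k + 1) ` {..<n}"
    unfolding odd_exps_def N_eq by (auto elim!: oddE)
  moreover have "inj_on (\<lambda>k. 2 * k + 1) {..<n}"
    by (auto simp: inj_on_def)
  ultimately show ?thesis
    by (simp add: card_image)
qed

lemma card_defining_sets: "card (defining_set 1) + card (defining_set 3) = n"
  using card_Un_disjoint[OF finite_defining_set finite_defining_set defining_sets_disjoint]
    card_odd_exps odd_exps_eq_Un by simp

lemma gpoly_eq_prod: "gpoly \<beta> j m = (\<Prod>i\<in>defining_set j. [:- (\<beta> ^ i), 1:])"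
  unfolding gpoly_def defining_set_def ..

lemma prod_root_factors_dvd_iff:
  assumes "I \<subseteq> {..<N}"
  shows "(\<Prod>i\<in>I. [:- (\<beta> ^ i), 1:]) dvd p \<longleftrightarrow> (\<forall>i\<in>I. poly p (\<beta> ^ i) = 0)"
proof
  have "finite I"
    using assms by (rule finite_subset) simp
  assume "(\<Prod>i\<in>I. [:- (\<beta> ^ i), 1:]) dvd p"
  moreover have "poly (\<Prod>i\<in>I. [:- (\<beta> ^ i), 1:]) (\<beta> ^ i) = 0" if "i \<in> I" for i
    using that \<open>finite I\<close> by (auto simp: poly_prod prod_zero_iff)
  ultimately show "\<forall>i\<in>I. poly p (\<beta> ^ i) = 0"
    by (auto elim!: dvdE)
next
  assume "\<forall>i\<in>I. poly p (\<beta> ^ i) = 0"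
  moreover have "finite I"
    using assms by (rule finite_subset) simp
  moreover have "(\<Prod>i\<in>I. [:- (\<beta> ^ i), 1:]) = (\<Prod>a\<in>(\<lambda>i. \<beta> ^ i) ` I. [:- a, 1:])"
    using inj_on_subset[OF inj_on_beta_power assms] by (simp add: prod.reindex)
  ultimately show "(\<Prod>i\<in>I. [:- (\<beta> ^ i), 1:]) dvd p"
    by (auto intro: prod_linear_dvd_if_roots)
qed

lemma prod_odd_exps: "(\<Prod>i\<in>odd_exps. [:- (\<beta> ^ i), 1:]) = monom 1 n + 1"
proof (rule monic_dvd_eq_if_degree_eq)
  have "poly (monom 1 n + 1) (\<beta> ^ i) = 0" if "odd i" for i
  proof -
    have "(\<beta> ^ i) ^ n = (\<beta> ^ n) ^ i"
      by (simp add: mult.commute flip: power_mult)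
    then show ?thesis
      using that beta_power_n by (simp add: poly_monom)
  qed
  then show "(\<Prod>i\<in>odd_exps. [:- (\<beta> ^ i), 1:]) dvd monom 1 n + 1"
    unfolding prod_root_factors_dvd_iff[OF odd_exps_subset] by (simp add: odd_exps_def)
  have "degree (monom 1 n + 1 :: 'a poly) = n"
    using n_pos by (simp add: degree_add_eq_left degree_monom_eq)
  moreover have "finite odd_exps"
    using odd_exps_subset by (rule finite_subset) simp
  ultimately show "degree (\<Prod>i\<in>odd_exps. [:- (\<beta> ^ i), 1:]) = degree (monom 1 n + 1 :: 'a poly)"
    using card_odd_exps by (simp add: degree_prod_sum_eq)
  have "lead_coeff (1 + monom 1 n :: 'a poly) = 1"
    using n_pos by (subst lead_coeff_add_le) (simp_all add: degree_monom_eq)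
  then show "lead_coeff (monom 1 n + 1 :: 'a poly) = 1"
    by (simp add: add.commute)
  then show "monom 1 n + 1 \<noteq> (0 :: 'a poly)"
    by (metis leading_coeff_0_iff one_neq_zero)
qed (simp add: lead_coeff_prod)

lemma gpoly_1_mult_gpoly_3: "gpoly \<beta> 1 m * gpoly \<beta> 3 m = monom 1 n + 1"
  unfolding gpoly_eq_prod prod_odd_exps[symmetric] odd_exps_eq_Un
  by (rule prod.union_disjoint[symmetric, OF finite_defining_set finite_defining_set defining_sets_disjoint])

lemma gpoly_dvd_xn_plus_1: "j = 1 \<or> j = 3 \<Longrightarrow> gpoly \<beta> j m dvd monom 1 n + 1"
  using gpoly_1_mult_gpoly_3 by (metis dvd_triv_left dvd_triv_right)

lemma degree_gpoly: "degree (gpoly \<beta> j m) = card (defining_set j)"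
  unfolding gpoly_eq_prod using finite_defining_set by (simp add: degree_prod_sum_eq)

lemma gpoly_neq_0: "gpoly \<beta> j m \<noteq> 0"
  unfolding gpoly_eq_prod using finite_defining_set by (simp add: prod_zero_iff)

lemma gpoly_dvd_iff: "gpoly \<beta> j m dvd p \<longleftrightarrow> (\<forall>i\<in>defining_set j. poly p (\<beta> ^ i) = 0)"
  unfolding gpoly_eq_prod using defining_set_subset by (rule prod_root_factors_dvd_iff)

lemma mult_3_mod_N_in_defining_set:
  assumes "i \<in> defining_set j"
  shows "3 * i mod N \<in> defining_set j"
proof -
  have "0 < i" "i < N"
    using assms defining_set_subset unfolding defining_set_def by auto
  then have "0 < 3 * i mod N" "3 * i mod N < N" "wt3 (3 * i mod N) = wt3 i"
    using wt3_mult_3_mod[of i m] unfolding N_def by simp_all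
  then show ?thesis
    using assms unfolding defining_set_def N_def by auto
qed

text \<open>Multiplication by 3 permutes each defining set, so the Frobenius map fixes the product.\<close>
lemma gpoly_in_prime_polys: "gpoly \<beta> j m \<in> prime_polys"
proof -
  define \<sigma> where "\<sigma> i = 3 * i mod N" for i
  have power_\<sigma>: "\<beta> ^ \<sigma> i = (\<beta> ^ i) ^ 3" for i
    unfolding \<sigma>_def using beta_power_mod_N[of "i * 3"] by (simp add: mult.commute power_mult)
  have inj: "inj_on \<sigma> (defining_set j)"
  proof (rule inj_onI)
    fix i i'
    assume i: "i \<in> defining_set j" "i' \<in> defining_set j" and "\<sigma> i = \<sigma> i'"
    then have "(\<beta> ^ i) ^ 3 = (\<beta> ^ i') ^ 3"
      by (simp flip: power_\<sigma>)
    then have "\<beta> ^ i = \<beta> ^ i'"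
      by (simp add: cube_eq_cube_iff)
    then show "i = i'"
      by (rule inj_onD[OF inj_on_beta_power]) (use i defining_set_subset in auto)
  qed
  have image: "\<sigma> ` defining_set j = defining_set j"
  proof (rule card_subset_eq)
    show "\<sigma> ` defining_set j \<subseteq> defining_set j"
      using mult_3_mod_N_in_defining_set unfolding \<sigma>_def by auto
  qed (use finite_defining_set card_image[OF inj] in simp_all)
  have "frob3 (gpoly \<beta> j m) = (\<Prod>i\<in>defining_set j. [:- (\<beta> ^ \<sigma> i), 1:])"
    by (simp add: gpoly_eq_prod frob3_prod frob3_linear power_\<sigma>)
  also have "\<dots> = (\<Prod>i\<in>\<sigma> ` defining_set j. [:- (\<beta> ^ i), 1:])"
    using inj by (simp add: prod.reindex)
  also have "\<dots> = gpoly \<beta> j m"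
    unfolding image gpoly_eq_prod ..
  finally show ?thesis
    unfolding prime_polys_iff_frob3 .
qed

lemma negacyclic_code_gpoly:
  "j = 1 \<or> j = 3 \<Longrightarrow> negacyclic_code n (gpoly \<beta> j m) = poly_code n (gpoly \<beta> j m)"
  using gpoly_in_prime_polys gpoly_dvd_xn_plus_1 n_pos by (rule negacyclic_code_eq_poly_code)

lemma has_dim3_negacyclic_code_gpoly:
  assumes "j = 1 \<or> j = 3"
  shows "has_dim3 (negacyclic_code n (gpoly \<beta> j m)) (n - card (defining_set j))"
proof -
  have "degree (gpoly \<beta> j m) \<le> n"
    using assms card_defining_sets degree_gpoly by auto
  then show ?thesis
    unfolding has_dim3_def negacyclic_code_gpoly[OF assms]
    using card_poly_code[OF gpoly_in_prime_polys gpoly_neq_0] finite_poly_code degree_gpoly by simp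
qed

end

section \<open>Odd \<open>m\<close>: dimensions, duality and distances\<close>

locale odd_gf3m = gf3m +
  assumes odd_m: "odd m" and five_le_m: "5 \<le> m"
begin

definition h :: nat where "h = (m - 1) div 2"

lemma m_eq: "m = 2 * h + 1"
  unfolding h_def using odd_m by (auto elim!: oddE)

lemma two_le_h: "2 \<le> h"
  using m_eq five_le_m by linarith

lemma three_power_m: "(3::nat) ^ m = 3 * 3 ^ h * 3 ^ h"
proof -
  have "(3::nat) ^ m = 3 ^ (h + h + 1)"
    using m_eq by (simp add: mult_2)
  then show ?thesis
    by (simp add: power_add)
qed

text \<open>The extreme exponents \<open>0\<close> and \<open>3\<^sup>m - 1\<close> have weights \<open>0\<close> and \<open>2m \<equiv> 2 (mod 4)\<close>.\<close>
lemma defining_set_eq: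
  assumes "j = 1 \<or> j = 3"
  shows "defining_set j = {i. i < 3 ^ m \<and> wt3 i mod 4 = j}"
proof (intro set_eqI iffI)
  fix i
  assume "i \<in> defining_set j"
  then show "i \<in> {i. i < 3 ^ m \<and> wt3 i mod 4 = j}"
    unfolding defining_set_def by auto
next
  fix i
  assume i: "i \<in> {i. i < 3 ^ m \<and> wt3 i mod 4 = j}"
  have "wt3 (3 ^ m - 1) = 4 * h + 2"
    using wt3_complement[of 0 m] m_eq by simp
  moreover have "(4 * h + 2) mod 4 = (2::nat)"
    by arith
  ultimately have "i \<noteq> 3 ^ m - 1"
    using i assms by auto
  moreover have "i \<noteq> 0"
  proof
    assume "i = 0"
    then show False
      using i assms by simp
  qed
  ultimately show "i \<in> defining_set j"
    using i unfolding defining_set_def by auto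
qed

lemma card_defining_set_1: "4 * int (card (defining_set 1)) = 3 ^ m - 1 + 2 * (-1) ^ h"
  using defining_set_eq[of 1] wt3_count_eq_card[of m 1] wt3_count_odd(1)[of h, folded m_eq] by simp

lemma card_defining_set_3: "4 * int (card (defining_set 3)) = 3 ^ m - 1 - 2 * (-1) ^ h"
  using defining_set_eq[of 3] wt3_count_eq_card[of m 3] wt3_count_odd(2)[of h, folded m_eq] by simp

lemma card_defining_set_less_n:
  assumes "j = 1 \<or> j = 3"
  shows "card (defining_set j) < n"
proof -
  have "(3::nat) ^ 2 \<le> 3 ^ m"
    using five_le_m by (intro power_increasing) simp_all
  then have "1 \<in> defining_set 1" and "5 \<in> defining_set 3"
    unfolding defining_set_def by (simp_all add: wt3_5 wt3_less_3)
  then have "card (defining_set 1) > 0" and "card (defining_set 3) > 0"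
    using finite_defining_set by (auto simp: card_gt_0_iff)
  then show ?thesis
    using assms card_defining_sets by auto
qed

text \<open>\<open>N - i\<close> complements all ternary digits of \<open>i\<close>, turning the weight \<open>w\<close> into
  \<open>2m - w \<equiv> 2 - w (mod 4)\<close>, which fixes the odd classes.\<close>
lemma N_minus_in_defining_set:
  assumes "j = 1 \<or> j = 3" and i: "i \<in> defining_set j"
  shows "N - i \<in> defining_set j"
proof -
  have "i < 3 ^ m" "wt3 i mod 4 = j"
    using i unfolding defining_set_eq[OF assms(1)] by auto
  moreover have "wt3 (N - i) + wt3 i = 4 * h + 2"
    using wt3_complement[OF \<open>i < 3 ^ m\<close>] m_eq unfolding N_def by simp
  then have "wt3 (N - i) = 4 * h + 2 - wt3 i" and "wt3 i \<le> 4 * h + 2"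
    by linarith+
  ultimately have "wt3 (N - i) mod 4 = j"
    using complement_mod_4[of "wt3 i" h j] assms(1) by simp
  then show ?thesis
    unfolding defining_set_eq[OF assms(1)] N_def by simp
qed

lemma poly_code_3_subset_dual:
  "poly_code n (gpoly \<beta> 3 m) \<subseteq> dual_code n (poly_code n (gpoly \<beta> 1 m))"
proof
  fix v
  assume v: "v \<in> poly_code n (gpoly \<beta> 3 m)"
  have "(\<Sum>i<n. coeff v i * coeff c i) = 0" if c: "c \<in> poly_code n (gpoly \<beta> 1 m)" for c
  proof -
    have "degree c < n" "degree v < n"
      using c v n_pos unfolding poly_code_def by (auto simp: ambient_iff)
    have roots: "\<forall>i\<in>odd_exps. poly (c * reflect_poly v) (\<beta> ^ i) = 0"
    proof
      fix i
      assume i: "i \<in> odd_exps"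
      show "poly (c * reflect_poly v) (\<beta> ^ i) = 0"
    proof (cases "i \<in> defining_set 1")
      case True
      then show ?thesis
        using c by (simp add: poly_code_def gpoly_dvd_iff)
    next
      case False
      then have "i \<in> defining_set 3"
        using i odd_exps_eq_Un by blast
      then have "N - i \<in> defining_set 3" and "i \<le> N"
        using N_minus_in_defining_set[of 3 i] defining_set_subset[of 3] by auto
      then have "poly v (inverse (\<beta> ^ i)) = 0"
        using v by (simp add: poly_code_def gpoly_dvd_iff inverse_beta_power)
      then show ?thesis
        using beta_neq_0 by (simp add: poly_reflect_poly_nz)
    qed
    qed
    have "monom 1 n + 1 dvd c * reflect_poly v"
      unfolding prod_odd_exps[symmetric] prod_root_factors_dvd_iff[OF odd_exps_subset]
      using roots .
    then show ?thesis
      using inner_eq_0_if_xn_plus_1_dvd[OF \<open>degree c < n\<close> \<open>degree v < n\<close>]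
      by (simp add: mult.commute)
  qed
  moreover have "v \<in> ambient n"
    using v unfolding poly_code_def by simp
  ultimately show "v \<in> dual_code n (poly_code n (gpoly \<beta> 1 m))"
    unfolding dual_code_def by simp
qed

lemma dual_code_poly_code_1:
  "dual_code n (poly_code n (gpoly \<beta> 1 m)) = poly_code n (gpoly \<beta> 3 m)"
proof (rule card_seteq[symmetric, OF finite_dual_code poly_code_3_subset_dual])
  have "card (dual_code n (poly_code n (gpoly \<beta> 1 m))) \<le> 3 ^ degree (gpoly \<beta> 1 m)"
    by (intro card_dual_code_le gpoly_neq_0 monom_mult_in_poly_code gpoly_in_prime_polys)
  also have "\<dots> = card (poly_code n (gpoly \<beta> 3 m))"
  proof -
    have "degree (gpoly \<beta> 3 m) \<le> n"
      using card_defining_sets by (simp add: degree_gpoly)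
    then show ?thesis
      using card_poly_code[OF gpoly_in_prime_polys gpoly_neq_0] card_defining_sets
      by (simp add: degree_gpoly)
  qed
  finally show "card (dual_code n (poly_code n (gpoly \<beta> 1 m))) \<le> card (poly_code n (gpoly \<beta> 3 m))" .
qed

text \<open>With \<open>x = 3\<^sup>h\<close>: \<open>2n = 3x\<^sup>2 - 1 = (x - 1)(3x + 3) + 2\<close>.\<close>
lemma coprime_n_step: "coprime n ((3 ^ h - 1) div 2)"
proof (rule coprimeI)
  fix d
  assume d: "d dvd n" "d dvd (3 ^ h - 1) div 2"
  define x where "x = (3::int) ^ h"
  have n: "int (2 * n) = 3 * x ^ 2 - 1"
  proof -
    have "2 * n = 3 * (3 ^ h) ^ 2 - 1"
      using N_eq three_power_m unfolding N_def by (simp add: power2_eq_square)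
    moreover have "(1::nat) \<le> 3 * (3 ^ h) ^ 2"
      by simp
    ultimately show ?thesis
      unfolding x_def by (simp add: of_nat_diff)
  qed
  have s: "int (2 * ((3 ^ h - 1) div 2)) = x - 1"
    unfolding x_def by (simp add: of_nat_diff)
  have "int (2 * d) dvd int (2 * n)" and "int (2 * d) dvd int (2 * ((3 ^ h - 1) div 2))"
    using d by (simp_all only: int_dvd_int_iff mult_dvd_mono dvd_refl)
  moreover have "3 * x ^ 2 - 1 = (x - 1) * (3 * x + 3) + 2"
    by (simp add: algebra_simps power2_eq_square)
  ultimately have "int (2 * d) dvd (x - 1) * (3 * x + 3) + 2" and "int (2 * d) dvd (x - 1) * (3 * x + 3)"
    unfolding n s by simp_all
  then have "int (2 * d) dvd 2"
    by (simp add: dvd_add_right_iff)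
  then show "is_unit d"
    by simp
qed

lemma inj_on_step_power: "inj_on (\<lambda>i. (\<beta> ^ (3 ^ h - 1)) ^ i) {..<n}"
proof -
  define s where "s = ((3::nat) ^ h - 1) div 2"
  have two_s: "3 ^ h - 1 = 2 * s"
    unfolding s_def by simp
  have main: "a = b" if "a < n" "b \<le> a" "(\<beta> ^ (3 ^ h - 1)) ^ a = (\<beta> ^ (3 ^ h - 1)) ^ b" for a b
  proof -
    have "\<beta> ^ ((3 ^ h - 1) * a) = \<beta> ^ ((3 ^ h - 1) * b)"
      using that(3) by (simp add: power_mult)
    then have "N dvd (3 ^ h - 1) * a - (3 ^ h - 1) * b"
      using that(2) by (simp add: beta_power_eq_iff mod_eq_dvd_iff_nat)
    moreover have "(3 ^ h - 1) * a - (3 ^ h - 1) * b = 2 * (s * (a - b))"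
      by (simp only: two_s) (simp add: diff_mult_distrib2)
    ultimately have "n dvd s * (a - b)"
      by (simp add: N_eq)
    then have "n dvd a - b"
      using coprime_n_step unfolding s_def by (simp add: coprime_dvd_mult_right_iff)
    moreover have "a - b < n"
      using that(1) by linarith
    ultimately have "a - b = 0"
      by (metis dvd_imp_le neq0_conv not_le)
    then show "a = b"
      using that(2) by simp
  qed
  show ?thesis
  proof (rule inj_onI)
    fix a b
    assume "a \<in> {..<n}" "b \<in> {..<n}" "(\<beta> ^ (3 ^ h - 1)) ^ a = (\<beta> ^ (3 ^ h - 1)) ^ b"
    then show "a = b"
      using main[of a b] main[of b a] by (cases "b \<le> a") auto
  qed
qed

text \<open>With \<open>X = 3\<^sup>h\<close> the exponent equals \<open>(C 3\<^sup>k + t) X + (X - 1 - t)\<close>, whose ternary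
  digits are those of \<open>C\<close>, of \<open>t\<close> and of the complement of \<open>t\<close>.\<close>
lemma run_in_defining_set:
  assumes "k \<le> h" "1 \<le> C" "C * 3 ^ k + 3 ^ k \<le> 2 * 3 ^ h" "(wt3 C + 2 * h) mod 4 = j"
    and "t < 3 ^ k"
  shows "C * 3 ^ (h + k) + 3 ^ h - 1 + t * (3 ^ h - 1) \<in> defining_set j"
proof -
  define X where "X = (3::nat) ^ h"
  have "(3::nat) ^ k \<le> 3 ^ h"
    using assms(1) by (rule power_increasing) simp
  then have "t < X"
    using assms(5) unfolding X_def by linarith
  then obtain u where u: "X = t + 1 + u"
    by (auto simp: less_iff_Suc_add)
  have e: "C * 3 ^ (h + k) + 3 ^ h - 1 + t * (3 ^ h - 1) = (C * 3 ^ k + t) * X + (X - 1 - t)"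
    unfolding power_add X_def[symmetric] using u by (simp add: algebra_simps)
  have "wt3 ((C * 3 ^ k + t) * X + (X - 1 - t)) = wt3 (C * 3 ^ k + t) + wt3 (X - 1 - t)"
    unfolding X_def by (rule wt3_mult_power_add) (use \<open>t < X\<close> X_def in simp)
  also have "\<dots> = wt3 C + wt3 t + wt3 (X - 1 - t)"
    using wt3_mult_power_add[OF assms(5), of C] by simp
  also have "\<dots> = wt3 C + 2 * h"
    using wt3_complement[of t h] \<open>t < X\<close> unfolding X_def by simp
  finally have weight: "wt3 ((C * 3 ^ k + t) * X + (X - 1 - t)) = wt3 C + 2 * h" .
  have "1 \<le> (C * 3 ^ k + t) * X"
    using assms(2) unfolding X_def by (simp add: Suc_le_eq)
  moreover have "(C * 3 ^ k + t + 1) * X \<le> 2 * X * X"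
    using assms(3,5) unfolding X_def by (intro mult_right_mono) simp_all
  moreover have "3 ^ m = 3 * X * X"
    unfolding X_def by (rule three_power_m)
  ultimately have "1 \<le> (C * 3 ^ k + t) * X + (X - 1 - t)"
    and "(C * 3 ^ k + t) * X + (X - 1 - t) \<le> 3 ^ m - 2"
    using \<open>t < X\<close> by (simp_all add: algebra_simps)
  then show ?thesis
    unfolding e defining_set_def using weight assms(4) by simp
qed

lemma min_dist_ge_run:
  assumes "j = 1 \<or> j = 3" "k \<le> h" "1 \<le> C" "C * 3 ^ k + 3 ^ k \<le> 2 * 3 ^ h"
    "(wt3 C + 2 * h) mod 4 = j"
  shows "3 ^ k + 1 \<le> min_dist n (negacyclic_code n (gpoly \<beta> j m))"
  unfolding negacyclic_code_gpoly[OF assms(1)]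
proof (rule min_dist_ge_if_weight_ge)
  show "gpoly \<beta> j m \<in> poly_code n (gpoly \<beta> j m)"
    using monom_mult_in_poly_code[OF gpoly_in_prime_polys, of 0 j n] card_defining_set_less_n[OF assms(1)]
    by (simp add: degree_gpoly)
  fix c
  assume c: "c \<in> poly_code n (gpoly \<beta> j m)" "c \<noteq> 0"
  define e where "e = C * 3 ^ (h + k) + 3 ^ h - 1"
  have roots: "poly c (\<beta> ^ e * (\<beta> ^ (3 ^ h - 1)) ^ t) = 0" if "t < 3 ^ k" for t
  proof -
    have "e + t * (3 ^ h - 1) \<in> defining_set j"
      unfolding e_def using run_in_defining_set[OF assms(2-5) that] .
    then have "poly c (\<beta> ^ (e + t * (3 ^ h - 1))) = 0"
      using c(1) by (simp add: poly_code_def gpoly_dvd_iff)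
    moreover have "\<beta> ^ (e + t * (3 ^ h - 1)) = \<beta> ^ e * (\<beta> ^ (3 ^ h - 1)) ^ t"
      by (simp add: power_add mult.commute flip: power_mult)
    ultimately show ?thesis
      by simp
  qed
  have "\<forall>i\<ge>n. coeff c i = 0"
    using c(1) unfolding poly_code_def ambient_def by simp
  moreover have "\<beta> ^ e \<noteq> 0"
    using beta_neq_0 by simp
  ultimately have "3 ^ k < hamming_weight n c"
    using bch_bound[OF c(2) _ _ inj_on_step_power roots] by blast
  then show "3 ^ k + 1 \<le> hamming_weight n c"
    by simp
next
  show "0 \<in> poly_code n (gpoly \<beta> j m)" and "gpoly \<beta> j m \<noteq> 0"
    by (simp_all add: zero_in_poly_code gpoly_neq_0)
qed (rule poly_code_diff)

lemma three_power_h: "(3::'b::comm_semiring_1) ^ h = 3 * 3 ^ (h - 1)"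
  using two_le_h by (simp flip: power_Suc)

lemma min_dist_1_ge:
  "((3::real) ^ h + 2 + (-1) ^ h) / 4 + 3 \<le> min_dist n (negacyclic_code n (gpoly \<beta> 1 m))"
proof (cases "even h")
  case True
  have "3 ^ h + 1 \<le> min_dist n (negacyclic_code n (gpoly \<beta> 1 m))"
    by (rule min_dist_ge_run[where C = 1]) (use True one_add_2_mult_mod_4[of h] in \<open>simp_all add: wt3_less_3\<close>)
  from of_nat_mono[where 'a = real, OF this] have "(3::real) ^ h + 1 \<le> min_dist n (negacyclic_code n (gpoly \<beta> 1 m))"
    by simp
  moreover have "(9::real) \<le> 3 ^ h"
    using power_increasing[OF two_le_h, of "3::real"] by simp
  ultimately show ?thesis
    using True by (simp add: field_simps)
next
  case False
  have "3 ^ (h - 1) + 1 \<le> min_dist n (negacyclic_code n (gpoly \<beta> 1 m))"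
    by (rule min_dist_ge_run[where C = 5])
      (use False three_power_h[where 'b = nat] three_add_2_mult_mod_4[of h] in \<open>simp_all add: wt3_5\<close>)
  from of_nat_mono[where 'a = real, OF this] have "(3::real) ^ (h - 1) + 1 \<le> min_dist n (negacyclic_code n (gpoly \<beta> 1 m))"
    by simp
  moreover have "2 \<le> h - 1"
    using False two_le_h by (cases "h = 2") auto
  then have "(9::real) \<le> 3 ^ (h - 1)"
    using power_increasing[of 2 "h - 1" "3::real"] by simp
  ultimately show ?thesis
    using False three_power_h[where 'b = real] by (simp add: field_simps)
qed

lemma min_dist_3_ge:
  "((3::real) ^ h - (-1) ^ h) / 4 + 2 \<le> min_dist n (negacyclic_code n (gpoly \<beta> 3 m))"
proof (cases "odd h")
  case True
  have "3 ^ h + 1 \<le> min_dist n (negacyclic_code n (gpoly \<beta> 3 m))"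
    by (rule min_dist_ge_run[where C = 1]) (use True one_add_2_mult_mod_4[of h] in \<open>simp_all add: wt3_less_3\<close>)
  from of_nat_mono[where 'a = real, OF this] have "(3::real) ^ h + 1 \<le> min_dist n (negacyclic_code n (gpoly \<beta> 3 m))"
    by simp
  moreover have "(9::real) \<le> 3 ^ h"
    using power_increasing[OF two_le_h, of "3::real"] by simp
  ultimately show ?thesis
    using True by (simp add: field_simps)
next
  case False
  have "3 ^ (h - 1) + 1 \<le> min_dist n (negacyclic_code n (gpoly \<beta> 3 m))"
    by (rule min_dist_ge_run[where C = 5])
      (use False three_power_h[where 'b = nat] three_add_2_mult_mod_4[of h] in \<open>simp_all add: wt3_5\<close>)
  from of_nat_mono[where 'a = real, OF this] have "(3::real) ^ (h - 1) + 1 \<le> min_dist n (negacyclic_code n (gpoly \<beta> 3 m))"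
    by simp
  moreover have "(3::real) \<le> 3 ^ (h - 1)"
    using two_le_h power_increasing[of 1 "h - 1" "3::real"] by simp
  ultimately show ?thesis
    using False three_power_h[where 'b = real] by (simp add: field_simps)
qed

lemma has_dim3_negacyclic_code_1: "has_dim3 (negacyclic_code n (gpoly \<beta> 1 m)) (card (defining_set 3))"
proof -
  have "n - card (defining_set 1) = card (defining_set 3)"
    using card_defining_sets by linarith
  then show ?thesis
    using has_dim3_negacyclic_code_gpoly[of 1] by simp
qed

lemma has_dim3_negacyclic_code_3: "has_dim3 (negacyclic_code n (gpoly \<beta> 3 m)) (card (defining_set 1))"
proof -
  have "n - card (defining_set 3) = card (defining_set 1)"
    using card_defining_sets by linarith
  then show ?thesis
    using has_dim3_negacyclic_code_gpoly[of 3] by simp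
qed

lemma dual_negacyclic_code_1: "dual_code n (negacyclic_code n (gpoly \<beta> 1 m)) = negacyclic_code n (gpoly \<beta> 3 m)"
  using dual_code_poly_code_1 by (simp add: negacyclic_code_gpoly)

end

theorem theorem44:
  fixes \<beta> :: "'a::{field,finite}" and m :: nat
  assumes "odd m" and "m \<ge> 5"
    and "card (UNIV :: 'a set) = 3 ^ m"
    and "primitive_element \<beta>"
  defines "n \<equiv> (3 ^ m - 1) div 2"
  shows "has_dim3 (negacyclic_code n (gpoly \<beta> 1 m))
             (nat (((3::int) ^ m - 1 + 2 * (-1) ^ ((m + 1) div 2)) div 4))
       \<and> real (min_dist n (negacyclic_code n (gpoly \<beta> 1 m)))
             \<ge> ((3::real) ^ ((m - 1) div 2) + 2 + (-1) ^ ((m - 1) div 2)) / 4 + 3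
       \<and> dual_code n (negacyclic_code n (gpoly \<beta> 1 m)) = negacyclic_code n (gpoly \<beta> 3 m)
       \<and> has_dim3 (negacyclic_code n (gpoly \<beta> 3 m))
             (nat (((3::int) ^ m - 1 + 2 * (-1) ^ ((m - 1) div 2)) div 4))
       \<and> real (min_dist n (negacyclic_code n (gpoly \<beta> 3 m)))
             \<ge> ((3::real) ^ ((m - 1) div 2) - (-1) ^ ((m - 1) div 2)) / 4 + 2"
proof -
  interpret C: odd_gf3m \<beta> m
    by unfold_locales (use assms in auto)
  have n: "n = C.n"
    unfolding n_def C.n_def ..
  have h: "(m - 1) div 2 = C.h"
    unfolding C.h_def ..
  have h': "(m + 1) div 2 = C.h + 1"
    unfolding C.h_def using \<open>odd m\<close> by (auto elim!: oddE)
  have "nat (((3::int) ^ m - 1 + 2 * (-1) ^ ((m + 1) div 2)) div 4) = card (C.defining_set 3)"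
    using C.card_defining_set_3 unfolding h' by simp
  moreover have "nat (((3::int) ^ m - 1 + 2 * (-1) ^ ((m - 1) div 2)) div 4) = card (C.defining_set 1)"
    using C.card_defining_set_1 unfolding h by simp
  ultimately show ?thesis
    unfolding n h
    using C.has_dim3_negacyclic_code_1 C.has_dim3_negacyclic_code_3 C.dual_negacyclic_code_1
      C.min_dist_1_ge C.min_dist_3_ge
    by simp
qed

end
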